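(* Assume the setting and standing assumptions described in the context. Let $0<\tau_i\le\tau_{i+1}$ and let $\underline{M}_{\tau_i},\underline{M}_{\tau_{i+1}}\subset\mathbb{R}^n$ be inner-approximations of the isochronous manifolds $M_{\tau_i}$ and $M_{\tau_{i+1}}$ respectively. Assume that each of $\underline{M}_{\tau_i}$ and $\underline{M}_{\tau_{i+1}}$ has the ray property (for every $x\in\mathbb{R}^n\setminus\{0\}$ there exists a unique $\lambda_x>0$ with $\lambda_x x$ in the set), and that the pair has the encirclement property (for every $x\in\underline{M}_{\tau_i}$ there exists a unique $\lambda_x\in(0,1)$ with $\lambda_x x\in\underline{M}_{\tau_{i+1}}$, and there is no $\kappa_x\ge1$ with $\kappa_x x\in\underline{M}_{\tau_{i+1}}$). Define $$\mathcal{R}_i=\{x\in\mathbb{R}^n:\ \exists\kappa_x\ge1\text{ with }\kappa_x x\in\underline{M}_{\tau_i}\ \text{and}\ \exists\lambda_x\in(0,1)\text{ with }\lambda_x x\in\underline{M}_{\tau_{i+1}}\}.$$ Then $\tau_i\le\tau(x)$ for all $x\in\mathcal{R}_i$.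
   Context: Let $f:\mathbb{R}^n\times\mathbb{R}^m\to\mathbb{R}^n$ and a feedback law $\upsilon:\mathbb{R}^n\to\mathbb{R}^m$ be given. Define $F:\mathbb{R}^{2n}\to\mathbb{R}^{2n}$ by $F(z,e)=\big(f(z,\upsilon(z+e)),\,-f(z,\upsilon(z+e))\big)$. For $x\in\mathbb{R}^n$, $\xi(t;x)$ denotes the solution of $\dot\xi=F(\xi)$ with $\xi(0;x)=(x,0)$. A triggering function $\phi:\mathbb{R}^{2n}\to\mathbb{R}$ is given, and $\tau(x)=\inf\{t>0:\phi(\xi(t;x))=0\}$. The isochronous manifold of time $\tau_\star>0$ is $M_{\tau_\star}=\{x:\tau(x)=\tau_\star\}$. A set $\underline{M}_{\tau_\star}\subset\mathbb{R}^n$ is an inner-approximation of $M_{\tau_\star}$ if for every $x\in\underline{M}_{\tau_\star}$ there exists $\kappa_x\ge1$ with $\kappa_x x\in M_{\tau_\star}$ and there is no $\lambda_x\in(0,1)$ with $\lambda_x x\in M_{\tau_\star}$. Standing assumptions: (i) $F$ is smooth and homogeneous of degree $\alpha\ge1$ with all weights $1$, i.e. $F(\lambda\xi)=\lambda^{\alpha+1}F(\xi)$ for all $\lambda>0$; (ii) $\phi$ is smooth and homogeneous of degree $\theta\ge1$ with weights $1$, i.e. $\phi(\lambda\xi)=\lambda^{\theta+1}\phi(\xi)$ for all $\lambda>0$; (iii) for every $x\neq0$, $\phi((x,0))<0$ and there exists $t_x\in(0,\infty)$ with $\phi(\xi(t_x;x))=0$; (iv) compact sets $\mathrm{Z}\subset\mathbb{R}^n$,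 $\Xi\subset\mathbb{R}^{2n}$ containing a neighbourhood of the origin are given such that for all $x\in\mathrm{Z}$, $t\ge0$: $\phi(\xi(t;x))\le0\Rightarrow\xi(t;x)\in\Xi$; (v) the origin is the only equilibrium of $\dot\zeta=f(\zeta,\upsilon(\zeta))$. *)

theory Defs
  imports "HOL-Analysis.Analysis"
begin

fun Ck :: "nat \<Rightarrow> ('a::real_normed_vector \<Rightarrow> 'b::real_normed_vector) \<Rightarrow> bool" where
  "Ck 0 g = continuous_on UNIV g"
| "Ck (Suc k) g = ((\<forall>x. g differentiable (at x)) \<and>
      (\<forall>v. Ck k (\<lambda>x. frechet_derivative g (at x) v)))"

definition smooth_map :: "('a::real_normed_vector \<Rightarrow> 'b::real_normed_vector) \<Rightarrow> bool" where
  "smooth_map g \<longleftrightarrow> (\<forall>k. Ck k g)"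

text \<open>The closed-loop/error vector field F(z,e) = (f(z,v(z+e)), -f(z,v(z+e))).\<close>
definition closed_loop_F ::
  "('a::euclidean_space \<Rightarrow> 'b::euclidean_space \<Rightarrow> 'a) \<Rightarrow> ('a \<Rightarrow> 'b) \<Rightarrow> 'a \<times> 'a \<Rightarrow> 'a \<times> 'a" where
  "closed_loop_F f u w = (f (fst w) (u (fst w + snd w)), - f (fst w) (u (fst w + snd w)))"

definition trig_time :: "('a \<times> 'a \<Rightarrow> real) \<Rightarrow> ('a \<Rightarrow> real \<Rightarrow> 'a \<times> 'a) \<Rightarrow> 'a \<Rightarrow> real" where
  "trig_time \<phi> \<xi> x = Inf {t. 0 < t \<and> \<phi> (\<xi> x t) = 0}"

definition isochronous :: "('a \<times> 'a \<Rightarrow> real) \<Rightarrow> ('a \<Rightarrow> real \<Rightarrow> 'a \<times> 'a) \<Rightarrow> real \<Rightarrow> 'a set" where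
  "isochronous \<phi> \<xi> ts = {x. trig_time \<phi> \<xi> x = ts}"

definition inner_approx :: "'a::real_vector set \<Rightarrow> 'a set \<Rightarrow> bool" where
  "inner_approx S M \<longleftrightarrow> (\<forall>x\<in>S. (\<exists>kap\<ge>1. kap *\<^sub>R x \<in> M) \<and> \<not> (\<exists>lam\<in>{0<..<1}. lam *\<^sub>R x \<in> M))"

definition ray_property :: "'a::real_vector set \<Rightarrow> bool" where
  "ray_property S \<longleftrightarrow> (\<forall>x. x \<noteq> 0 \<longrightarrow> (\<exists>!lam. 0 < lam \<and> lam *\<^sub>R x \<in> S))"

definition encirclement :: "'a::real_vector set \<Rightarrow> 'a set \<Rightarrow> bool" where
  "encirclement S1 S2 \<longleftrightarrow> (\<forall>x\<in>S1. (\<exists>!lam. lam \<in> {0<..<1} \<and> lam *\<^sub>R x \<in> S2)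
      \<and> \<not> (\<exists>kap\<ge>1. kap *\<^sub>R x \<in> S2))"

definition region_between :: "'a::real_vector set \<Rightarrow> 'a set \<Rightarrow> 'a set" where
  "region_between S1 S2 = {x. (\<exists>kap\<ge>1. kap *\<^sub>R x \<in> S1) \<and> (\<exists>lam\<in>{0<..<1}. lam *\<^sub>R x \<in> S2)}"

end

theory Submission
  imports Defs
begin

text \<open>Trajectories of the homogeneous closed loop scale: if \<open>x = \<mu> y\<close> then
  \<open>\<xi>(t; x) = \<mu> \<xi>(\<mu>\<^sup>\<alpha> t; y)\<close>, by uniqueness of solutions of the smooth ODE. Since \<open>\<phi>\<close> is
  homogeneous, every zero of \<open>t \<mapsto> \<phi>(\<xi>(t; x))\<close> therefore yields the zero \<open>\<mu>\<^sup>\<alpha> t\<close> of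
  \<open>t \<mapsto> \<phi>(\<xi>(t; y))\<close>, which is earlier when \<open>\<mu> \<le> 1\<close>; hence \<open>\<tau>(x) \<ge> \<tau>(y)\<close>. A point
  \<open>x\<close> of the region lies on a ray through some \<open>y = c x\<close>, \<open>c \<ge> 1\<close>, of the isochronous
  manifold \<open>M\<^sub>\<tau>\<^sub>i\<close>, so \<open>\<tau>(x) \<ge> \<tau>(y) = \<tau>\<^sub>i\<close>.\<close>

lemma has_vector_derivative_nonneg_imp_continuous_on:
  assumes "\<And>t. 0 \<le> t \<Longrightarrow> (z has_vector_derivative D t) (at t within {0..})"
  shows "continuous_on {0..} z"
  using assms by (auto intro!: has_derivative_continuous_on simp: has_vector_derivative_def)

lemma has_vector_derivative_within_nonneg_at:
  assumes "(z has_vector_derivative D) (at t within {0..})" and "0 < t"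
  shows "(z has_vector_derivative D) (at t)"
proof -
  have "(z has_vector_derivative D) (at t within {0<..})"
    by (rule has_vector_derivative_within_subset[OF assms(1)]) auto
  then show ?thesis
    using assms(2) by (subst (asm) has_vector_derivative_within_open) auto
qed

lemma inner_le_of_norm_le:
  fixes d e :: "'c::real_inner"
  assumes "norm e \<le> L * norm d"
  shows "d \<bullet> e \<le> L * (d \<bullet> d)"
proof -
  have "d \<bullet> e \<le> norm d * norm e" by (rule norm_cauchy_schwarz)
  also have "\<dots> \<le> norm d * (L * norm d)" using assms by (simp add: mult_left_mono)
  finally show ?thesis by (simp add: power2_norm_eq_inner[symmetric] power2_eq_square algebra_simps)
qed

lemma lipschitz_ode_solutions_unique:
  fixes F :: "'c::real_inner \<Rightarrow> 'c" and z1 z2 :: "real \<Rightarrow> 'c"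
  assumes lip: "L-lipschitz_on K F" and T: "0 \<le> T"
    and d1: "\<And>t. 0 \<le> t \<Longrightarrow> (z1 has_vector_derivative F (z1 t)) (at t within {0..})"
    and d2: "\<And>t. 0 \<le> t \<Longrightarrow> (z2 has_vector_derivative F (z2 t)) (at t within {0..})"
    and K1: "\<And>t. 0 \<le> t \<Longrightarrow> t \<le> T \<Longrightarrow> z1 t \<in> K"
    and K2: "\<And>t. 0 \<le> t \<Longrightarrow> t \<le> T \<Longrightarrow> z2 t \<in> K"
    and init: "z1 0 = z2 0"
  shows "z1 T = z2 T"
proof -
  \<comment> \<open>The weighted energy \<open>h\<close> is nonincreasing: Lipschitz continuity bounds the growth of
    \<open>|z1 - z2|\<^sup>2\<close> by \<open>2L|z1 - z2|\<^sup>2\<close>, which the exponential weight compensates.\<close>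
  define h where "h t = exp (-2*L*t) * ((z1 t - z2 t) \<bullet> (z1 t - z2 t))" for t
  have "continuous_on {0..T} z1" "continuous_on {0..T} z2"
    using has_vector_derivative_nonneg_imp_continuous_on[OF d1]
      has_vector_derivative_nonneg_imp_continuous_on[OF d2]
    by (auto elim: continuous_on_subset)
  then have h_cont: "continuous_on {0..T} h"
    unfolding h_def by (intro continuous_intros)
  have "h T \<le> h 0"
  proof (rule DERIV_nonpos_imp_decreasing_open[OF T _ h_cont])
    fix t assume t: "0 < t" "t < T"
    define d where "d = z1 t - z2 t"
    define e where "e = F (z1 t) - F (z2 t)"
    have diff: "((\<lambda>s. z1 s - z2 s) has_derivative (\<lambda>r. r *\<^sub>R e)) (at t)"
      unfolding e_def has_vector_derivative_def[symmetric]
      using t by (intro derivative_intros has_vector_derivative_within_nonneg_at d1 d2) auto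
    have energy: "((\<lambda>s. (z1 s - z2 s) \<bullet> (z1 s - z2 s)) has_real_derivative 2 * (d \<bullet> e)) (at t)"
      unfolding has_field_derivative_def
      by (rule has_derivative_eq_rhs[OF has_derivative_inner[OF diff diff]])
        (auto simp: fun_eq_iff d_def inner_commute algebra_simps)
    have weight: "((\<lambda>r. exp (-2*L*r)) has_real_derivative exp (-2*L*t) * (-2*L)) (at t)"
      by (auto intro!: derivative_eq_intros)
    have h_deriv: "(h has_real_derivative
        exp (-2*L*t) * (2 * (d \<bullet> e) - 2 * L * (d \<bullet> d))) (at t)"
      unfolding h_def
      by (rule DERIV_cong[OF DERIV_mult[OF weight energy]]) (simp add: d_def algebra_simps)
    have "norm e \<le> L * norm d"
      unfolding e_def d_def using lipschitz_on_normD[OF lip K1[of t] K2[of t]] t by auto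
    then have "d \<bullet> e \<le> L * (d \<bullet> d)"
      by (rule inner_le_of_norm_le)
    then show "\<exists>y. (h has_real_derivative y) (at t) \<and> y \<le> 0"
      using h_deriv by (intro exI conjI) (auto intro: mult_nonneg_nonpos)
  qed
  moreover have "h 0 = 0" using init by (simp add: h_def)
  ultimately have "(z1 T - z2 T) \<bullet> (z1 T - z2 T) \<le> 0"
    unfolding h_def by (simp add: mult_le_0_iff)
  then show ?thesis
    by (metis eq_iff_diff_eq_0 inner_gt_zero_iff not_le)
qed

lemma smooth_map_local_lipschitz:
  fixes F :: "'c::euclidean_space \<Rightarrow> 'c"
  assumes "smooth_map F"
  shows "local_lipschitz (UNIV::real set) UNIV (\<lambda>_. F)"
proof -
  have "Ck (Suc 0) F" using assms unfolding smooth_map_def by blast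
  then have differentiable: "\<And>x. F differentiable (at x)"
    and deriv_cont: "\<And>v. continuous_on UNIV (\<lambda>x. frechet_derivative F (at x) v)"
    by auto
  have has_deriv: "\<And>x. (F has_derivative frechet_derivative F (at x)) (at x)"
    using differentiable frechet_derivative_works by blast
  define F' where "F' p = Blinfun (frechet_derivative F (at (snd p)))" for p :: "real \<times> 'c"
  have F'_apply: "\<And>p. blinfun_apply (F' p) = frechet_derivative F (at (snd p))"
    unfolding F'_def
    using has_deriv has_derivative_bounded_linear bounded_linear_Blinfun_apply by blast
  show ?thesis
  proof (rule c1_implies_local_lipschitz[where f' = F'])
    fix t x show "((\<lambda>_. F) t has_derivative blinfun_apply (F' (t, x))) (at x)"
      using has_deriv F'_apply by simp
  next
    have "isCont F' p" for p :: "real \<times> 'c"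
    proof (rule continuous_blinfun_componentwiseI1)
      fix i :: 'c
      have "isCont (\<lambda>x. frechet_derivative F (at x) i) (snd p)"
        using deriv_cont[of i] by (simp add: continuous_on_eq_continuous_at)
      then have "isCont ((\<lambda>x. frechet_derivative F (at x) i) \<circ> snd) p"
        by (intro continuous_at_compose continuous_intros)
      then show "isCont (\<lambda>x. blinfun_apply (F' x) i) p" by (simp add: F'_apply o_def)
    qed
    then show "continuous_on (UNIV \<times> UNIV) F'"
      by (intro continuous_at_imp_continuous_on) auto
  qed auto
qed

lemma smooth_ode_solutions_unique:
  fixes F :: "'c::euclidean_space \<Rightarrow> 'c" and z1 z2 :: "real \<Rightarrow> 'c"
  assumes smooth: "smooth_map F"
    and d1: "\<And>t. 0 \<le> t \<Longrightarrow> (z1 has_vector_derivative F (z1 t)) (at t within {0..})"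
    and d2: "\<And>t. 0 \<le> t \<Longrightarrow> (z2 has_vector_derivative F (z2 t)) (at t within {0..})"
    and init: "z1 0 = z2 0" and T: "0 \<le> T"
  shows "z1 T = z2 T"
proof -
  define K where "K = z1 ` {0..T} \<union> z2 ` {0..T}"
  have "continuous_on {0..T} z1" "continuous_on {0..T} z2"
    using has_vector_derivative_nonneg_imp_continuous_on[OF d1]
      has_vector_derivative_nonneg_imp_continuous_on[OF d2]
    by (auto elim: continuous_on_subset)
  then have "compact K"
    unfolding K_def by (intro compact_Un compact_continuous_image compact_Icc)
  moreover have "local_lipschitz {0::real} K (\<lambda>_. F)"
    using local_lipschitz_subset[OF smooth_map_local_lipschitz[OF smooth]] by blast
  ultimately obtain L where "\<And>t. t \<in> {0::real} \<Longrightarrow> L-lipschitz_on K F"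
    using local_lipschitz_compact_implies_lipschitz[of "{0}" K "\<lambda>_. F"] by auto
  then have "L-lipschitz_on K F" by simp
  then show ?thesis
    by (rule lipschitz_ode_solutions_unique[OF _ T d1 d2 _ _ init]) (auto simp: K_def)
qed

lemma homogeneous_ode_solution_scaling:
  fixes F :: "'c::euclidean_space \<Rightarrow> 'c" and \<xi> :: "'d \<Rightarrow> real \<Rightarrow> 'c"
  assumes smooth: "smooth_map F"
    and ode: "\<And>x t. 0 \<le> t \<Longrightarrow> (\<xi> x has_vector_derivative F (\<xi> x t)) (at t within {0..})"
    and hom: "\<And>l w. 0 < l \<Longrightarrow> F (l *\<^sub>R w) = l powr (\<alpha> + 1) *\<^sub>R F w"
    and \<mu>: "0 < \<mu>" and init: "\<xi> x 0 = \<mu> *\<^sub>R \<xi> y 0" and t: "0 \<le> t"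
  shows "\<xi> x t = \<mu> *\<^sub>R \<xi> y (\<mu> powr \<alpha> * t)"
proof (rule smooth_ode_solutions_unique[OF smooth ode _ _ t])
  show "\<xi> x 0 = \<mu> *\<^sub>R \<xi> y (\<mu> powr \<alpha> * 0)" using init by simp
next
  define p where "p = \<mu> powr \<alpha>"
  have "0 < p" unfolding p_def using \<mu> by simp
  fix s :: real assume s: "0 \<le> s"
  have "((\<lambda>t. p * t) has_vector_derivative p) (at s within {0..})"
    by (auto intro!: derivative_eq_intros)
  moreover have "(\<xi> y has_vector_derivative F (\<xi> y (p * s))) (at (p * s) within (\<lambda>t. p * t) ` {0..})"
    by (rule has_vector_derivative_within_subset[OF ode]) (use s \<open>0 < p\<close> in auto)
  ultimately have "((\<lambda>t. \<xi> y (p * t)) has_vector_derivative p *\<^sub>R F (\<xi> y (p * s))) (at s within {0..})"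
    using vector_diff_chain_within by (fastforce simp: o_def)
  then have "((\<lambda>t. \<mu> *\<^sub>R \<xi> y (p * t)) has_vector_derivative \<mu> *\<^sub>R p *\<^sub>R F (\<xi> y (p * s))) (at s within {0..})"
    by (rule bounded_linear.has_vector_derivative[OF bounded_linear_scaleR_right])
  moreover have "\<mu> *\<^sub>R p *\<^sub>R F (\<xi> y (p * s)) = F (\<mu> *\<^sub>R \<xi> y (p * s))"
    using hom[OF \<mu>] \<mu> unfolding p_def by (simp add: powr_add)
  ultimately show "((\<lambda>t. \<mu> *\<^sub>R \<xi> y (\<mu> powr \<alpha> * t)) has_vector_derivative
      F (\<mu> *\<^sub>R \<xi> y (\<mu> powr \<alpha> * s))) (at s within {0..})"
    unfolding p_def by simp
qed

lemma trig_time_le_of_earlier_zeros: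
  assumes hit: "\<exists>t>0. \<phi> (\<xi> x t) = 0"
    and earlier: "\<And>t. 0 < t \<Longrightarrow> \<phi> (\<xi> x t) = 0 \<Longrightarrow> \<exists>s\<in>{0<..t}. \<phi> (\<xi> y s) = 0"
  shows "trig_time \<phi> \<xi> y \<le> trig_time \<phi> \<xi> x"
  unfolding trig_time_def
proof (rule cInf_greatest)
  show "{t. 0 < t \<and> \<phi> (\<xi> x t) = 0} \<noteq> {}" using hit by auto
next
  fix t assume "t \<in> {t. 0 < t \<and> \<phi> (\<xi> x t) = 0}"
  then have "\<exists>s\<in>{0<..t}. \<phi> (\<xi> y s) = 0" using earlier by auto
  then obtain s where "0 < s" "s \<le> t" "\<phi> (\<xi> y s) = 0" by auto
  then have "Inf {t. 0 < t \<and> \<phi> (\<xi> y t) = 0} \<le> s"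
    by (intro cInf_lower bdd_belowI[of _ 0]) auto
  then show "Inf {t. 0 < t \<and> \<phi> (\<xi> y t) = 0} \<le> t" using \<open>s \<le> t\<close> by simp
qed

lemma trig_time_le_of_homogeneous_contraction:
  fixes F :: "'a::euclidean_space \<times> 'a \<Rightarrow> 'a \<times> 'a" and \<xi> :: "'a \<Rightarrow> real \<Rightarrow> 'a \<times> 'a"
    and \<phi> :: "'a \<times> 'a \<Rightarrow> real"
  assumes smooth: "smooth_map F"
    and ode: "\<And>x t. 0 \<le> t \<Longrightarrow> (\<xi> x has_vector_derivative F (\<xi> x t)) (at t within {0..})"
    and F_hom: "\<And>l w. 0 < l \<Longrightarrow> F (l *\<^sub>R w) = l powr (\<alpha> + 1) *\<^sub>R F w"
    and \<phi>_hom: "\<And>l w. 0 < l \<Longrightarrow> \<phi> (l *\<^sub>R w) = l powr \<beta> * \<phi> w"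
    and \<alpha>: "0 \<le> \<alpha>" and \<mu>: "0 < \<mu>" "\<mu> \<le> 1"
    and init: "\<xi> x 0 = \<mu> *\<^sub>R \<xi> y 0" and hit: "\<exists>t>0. \<phi> (\<xi> x t) = 0"
  shows "trig_time \<phi> \<xi> y \<le> trig_time \<phi> \<xi> x"
proof (rule trig_time_le_of_earlier_zeros[where \<phi> = \<phi> and \<xi> = \<xi>, OF hit])
  fix t :: real assume "0 < t" "\<phi> (\<xi> x t) = 0"
  moreover have "\<xi> x t = \<mu> *\<^sub>R \<xi> y (\<mu> powr \<alpha> * t)"
    using \<open>0 < t\<close> by (intro homogeneous_ode_solution_scaling[OF smooth ode F_hom \<mu>(1) init]) auto
  ultimately have "\<phi> (\<xi> y (\<mu> powr \<alpha> * t)) = 0"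
    using \<phi>_hom[OF \<mu>(1)] \<mu>(1) by simp
  moreover have "\<mu> powr \<alpha> * t \<in> {0<..t}"
    using \<mu> \<alpha> \<open>0 < t\<close> by (auto simp: powr_le1 mult_le_cancel_right1)
  ultimately show "\<exists>s\<in>{0<..t}. \<phi> (\<xi> y s) = 0" by blast
qed

theorem corollary1:
  fixes f :: "'a::euclidean_space \<Rightarrow> 'b::euclidean_space \<Rightarrow> 'a"
    and u :: "'a \<Rightarrow> 'b"
    and \<phi> :: "'a \<times> 'a \<Rightarrow> real"
    and \<xi> :: "'a \<Rightarrow> real \<Rightarrow> 'a \<times> 'a"
    and \<alpha> \<theta> \<tau>i \<tau>i1 :: real
    and Z :: "'a set" and \<Xi> :: "('a \<times> 'a) set"
    and Mi Mi1 :: "'a set"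
  assumes sol_init: "\<And>x. \<xi> x 0 = (x, 0)"
    and sol_ode: "\<And>x t. t \<ge> 0 \<Longrightarrow>
        (\<xi> x has_vector_derivative closed_loop_F f u (\<xi> x t)) (at t within {0..})"
    and F_smooth: "smooth_map (closed_loop_F f u)"
    and \<alpha>_ge: "\<alpha> \<ge> 1"
    and F_hom: "\<And>l w. l > 0 \<Longrightarrow>
        closed_loop_F f u (l *\<^sub>R w) = (l powr (\<alpha> + 1)) *\<^sub>R closed_loop_F f u w"
    and \<phi>_smooth: "smooth_map \<phi>"
    and \<theta>_ge: "\<theta> \<ge> 1"
    and \<phi>_hom: "\<And>l w. l > 0 \<Longrightarrow> \<phi> (l *\<^sub>R w) = l powr (\<theta> + 1) * \<phi> w"
    and \<phi>_neg: "\<And>x. x \<noteq> 0 \<Longrightarrow> \<phi> (x, 0) < 0"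
    and \<phi>_hit: "\<And>x. x \<noteq> 0 \<Longrightarrow> \<exists>t>0. \<phi> (\<xi> x t) = 0"
    and Z_cpt: "compact Z" and Z_nbhd: "\<exists>e>0. ball 0 e \<subseteq> Z"
    and \<Xi>_cpt: "compact \<Xi>" and \<Xi>_nbhd: "\<exists>e>0. ball 0 e \<subseteq> \<Xi>"
    and Z_\<Xi>: "\<And>x t. x \<in> Z \<Longrightarrow> t \<ge> 0 \<Longrightarrow> \<phi> (\<xi> x t) \<le> 0 \<Longrightarrow> \<xi> x t \<in> \<Xi>"
    and equil: "\<And>z. f z (u z) = 0 \<Longrightarrow> z = 0"
    and \<tau>_pos: "0 < \<tau>i" and \<tau>_le: "\<tau>i \<le> \<tau>i1"
    and inner_i: "inner_approx Mi (isochronous \<phi> \<xi> \<tau>i)"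
    and inner_i1: "inner_approx Mi1 (isochronous \<phi> \<xi> \<tau>i1)"
    and ray_i: "ray_property Mi" and ray_i1: "ray_property Mi1"
    and encirc: "encirclement Mi Mi1"
  shows "\<forall>x \<in> region_between Mi Mi1. \<tau>i \<le> trig_time \<phi> \<xi> x"
proof
  fix x assume "x \<in> region_between Mi Mi1"
  then obtain \<kappa> where "\<kappa> \<ge> 1" "\<kappa> *\<^sub>R x \<in> Mi" unfolding region_between_def by auto
  then obtain k where "k \<ge> 1" "(k * \<kappa>) *\<^sub>R x \<in> isochronous \<phi> \<xi> \<tau>i"
    using inner_i unfolding inner_approx_def by auto
  moreover from \<open>k \<ge> 1\<close> \<open>\<kappa> \<ge> 1\<close> have "1 \<le> k * \<kappa>"
    by (metis mult_mono' mult_1 zero_le_one order_trans)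
  moreover define \<mu> where "\<mu> = 1 / (k * \<kappa>)"
  ultimately have \<mu>: "0 < \<mu>" "\<mu> \<le> 1" and on_Mi: "trig_time \<phi> \<xi> ((1 / \<mu>) *\<^sub>R x) = \<tau>i"
    by (auto simp: isochronous_def)
  show "\<tau>i \<le> trig_time \<phi> \<xi> x"
  proof (cases "x = 0")
    case False
    have "trig_time \<phi> \<xi> ((1 / \<mu>) *\<^sub>R x) \<le> trig_time \<phi> \<xi> x"
      using \<alpha>_ge \<mu> sol_init \<phi>_hit[OF False]
      by (intro trig_time_le_of_homogeneous_contraction[OF F_smooth sol_ode F_hom \<phi>_hom]) auto
    then show ?thesis using on_Mi by simp
  qed (use on_Mi in simp)
qed

end
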